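(* Let $m>4$ and let $\lambda=(\boldsymbol\lambda_1,\ldots,\boldsymbol\lambda_m)$ be a characteristic matrix on the convex $m$-gon with edges $F_1,\ldots,F_m$ numbered cyclically. Then $\lambda$ decomposes as a connected sum of characteristic matrices on two convex polygons; that is, there exist $1\le i<j\le m$ with $F_i\cap F_j=\emptyset$ and $\det(\boldsymbol\lambda_i,\boldsymbol\lambda_j)=\pm1$, so that $(\boldsymbol\lambda_i,\boldsymbol\lambda_{i+1},\ldots,\boldsymbol\lambda_j)$ is a characteristic matrix on the convex $(j-i+1)$-gon, $(\boldsymbol\lambda_j,\ldots,\boldsymbol\lambda_m,\boldsymbol\lambda_1,\ldots,\boldsymbol\lambda_i)$ is a characteristic matrix on the convex $(m-j+i+1)$-gon, and $\lambda$ is their connected sum.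
   Context: The edges (facets) $F_1,\ldots,F_m$ of the convex $m$-gon are numbered clockwise, so $F_i\cap F_{i+1}\neq\emptyset$ (indices mod $m$) and these are the only intersecting pairs of distinct edges. A characteristic matrix on the convex $m$-gon is an integer $2\times m$ matrix $(\boldsymbol\lambda_1,\ldots,\boldsymbol\lambda_m)$ with $\det(\boldsymbol\lambda_i,\boldsymbol\lambda_{i+1})=\pm1$ for all $i$ (indices mod $m$). Connected sum of characteristic matrices: the polygon is cut along a diagonal joining the vertices... more precisely, the $m$-gon is the connected sum of the two smaller polygons glued along the two common edges $F_i,F_j$, and the characteristic matrix of the connected sum agrees with each summand on the corresponding edges; the associated quasitoric manifold is then the connected sum of the two associated quasitoric manifolds. *)

theory Defs
  imports Main
begin

definition det2 :: "int \<times> int \<Rightarrow> int \<times> int \<Rightarrow> int" where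
  "det2 u v = fst u * snd v - snd u * fst v"

text \<open>A characteristic matrix on the convex m-gon (m = length of the list, m >= 3),
  columns listed in the cyclic order of the edges F_1,...,F_m (list index k = edge F_(k+1)).\<close>
definition char_matrix :: "(int \<times> int) list \<Rightarrow> bool" where
  "char_matrix lam \<longleftrightarrow> length lam \<ge> 3 \<and>
     (\<forall>k < length lam. det2 (lam ! k) (lam ! ((k + 1) mod length lam)) \<in> {1, -1})"

definition facets_meet :: "nat \<Rightarrow> nat \<Rightarrow> nat \<Rightarrow> bool" where
  "facets_meet m i j \<longleftrightarrow> i = j \<or> j = (i + 1) mod m \<or> i = (j + 1) mod m"

text \<open>Connected sum of characteristic matrices A (on edges G_1..G_p) and B (on edges H_1..H_q),
  glued along the common edges: last A = first B and last B = first A.\<close>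
definition connected_sum :: "(int \<times> int) list \<Rightarrow> (int \<times> int) list \<Rightarrow> (int \<times> int) list" where
  "connected_sum A B = butlast A @ butlast B"

definition glueable :: "(int \<times> int) list \<Rightarrow> (int \<times> int) list \<Rightarrow> bool" where
  "glueable A B \<longleftrightarrow> A \<noteq> [] \<and> B \<noteq> [] \<and> last A = hd B \<and> last B = hd A"

end

theory Submission
  imports Defs
begin

text \<open>Let \<open>b\<close> be a column of maximal Euclidean length and \<open>p\<close>, \<open>q\<close> its two neighbours.
  Writing \<open>q\<close> in the basis \<open>p, b\<close> (Cramer's rule) and comparing lengths shows
  \<open>\<bar>det(p, q)\<bar> \<le> 1\<close>.  If \<open>det(p, q) = \<plusminus>1\<close>, the diagonal joining the edges of \<open>p\<close> and \<open>q\<close>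
  splits the polygon; if \<open>det(p, q) = 0\<close>, then \<open>p = \<plusminus>q\<close>, so \<open>p\<close> and the column after \<open>q\<close>
  form a unimodular pair, which is a diagonal because \<open>m \<ge> 5\<close>.  Cutting along a unimodular
  diagonal gives two cyclic windows of the matrix, each closed up by that diagonal.\<close>

abbreviation unimodular :: "int set" where "unimodular \<equiv> {1, -1}"

definition sqnorm :: "int \<times> int \<Rightarrow> int" where
  "sqnorm v = fst v ^ 2 + snd v ^ 2"

definition dot :: "int \<times> int \<Rightarrow> int \<times> int \<Rightarrow> int" where
  "dot u v = fst u * fst v + snd u * snd v"

lemma det2_swap: "det2 v u = - det2 u v"
  unfolding det2_def by (simp add: algebra_simps)

lemma det2_cramer:
  "det2 p b * fst q = det2 q b * fst p + det2 p q * fst b"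
  "det2 p b * snd q = det2 q b * snd p + det2 p q * snd b"
  unfolding det2_def by algebra+

lemma sqnorm_cramer:
  "det2 p b ^ 2 * sqnorm q =
     det2 q b ^ 2 * sqnorm p + 2 * det2 q b * det2 p q * dot p b + det2 p q ^ 2 * sqnorm b"
  unfolding sqnorm_def dot_def det2_def by algebra

lemma lagrange_identity: "dot u v ^ 2 + det2 u v ^ 2 = sqnorm u * sqnorm v"
  unfolding dot_def det2_def sqnorm_def by algebra

lemma sqnorm_pos_if_det2_nonzero:
  assumes "det2 u v \<noteq> 0" shows "sqnorm v > 0"
proof -
  have "v \<noteq> (0, 0)" using assms by (auto simp: det2_def)
  then show ?thesis
    by (cases v) (auto simp: sqnorm_def add_pos_nonneg add_nonneg_pos)
qed

lemma abs_det2_le_1_if_shorter: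
  assumes pb: "det2 p b \<in> unimodular" and qb: "det2 q b \<in> unimodular"
    and "sqnorm p \<le> sqnorm b" "sqnorm q \<le> sqnorm b"
  shows "\<bar>det2 p q\<bar> \<le> 1"
proof (rule ccontr)
  assume "\<not> \<bar>det2 p q\<bar> \<le> 1"
  then have k2: "\<bar>det2 p q\<bar> \<ge> 2" by simp
  define s c k B where "s = det2 q b" and "c = dot p b" and "k = det2 p q" and "B = sqnorm b"
  have e2: "det2 p b ^ 2 = 1" using pb by auto
  have s2: "s ^ 2 = 1" using qb unfolding s_def by auto
  have B: "B > 0" using pb sqnorm_pos_if_det2_nonzero[of p b] unfolding B_def by auto
  have cB: "c ^ 2 + 1 = sqnorm p * B"
    using lagrange_identity[of p b] e2 unfolding c_def B_def by simp
  also have "\<dots> \<le> B * B" using \<open>sqnorm p \<le> sqnorm b\<close> B unfolding B_def by simp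
  finally have "c ^ 2 < B ^ 2" by (simp add: power2_eq_square)
  then have "\<bar>c\<bar> < B"
    using power2_less_imp_less[of "\<bar>c\<bar>" B] B by simp
  have "sqnorm q = sqnorm p + 2 * s * k * c + k ^ 2 * B"
    using sqnorm_cramer[of p b q] e2 s2 unfolding s_def k_def c_def B_def by simp
  \<comment> \<open>with \<open>\<bar>c\<bar> < B\<close> this forces \<open>sqnorm q > B\<close> as soon as \<open>\<bar>k\<bar> \<ge> 2\<close>\<close>
  then have "sqnorm q * B = (k * B + s * c) ^ 2 + 1"
    using cB s2 by (simp add: algebra_simps power2_eq_square)
  moreover have "\<bar>k * B + s * c\<bar> > B"
  proof -
    have "\<bar>s * c\<bar> = \<bar>c\<bar>" using qb unfolding s_def by (auto simp: abs_mult)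
    moreover have "\<bar>k * B\<bar> \<ge> 2 * B"
      using k2 B unfolding k_def by (simp add: abs_mult mult_right_mono)
    ultimately show ?thesis using \<open>\<bar>c\<bar> < B\<close> by linarith
  qed
  then have "(k * B + s * c) ^ 2 > B ^ 2"
    using abs_le_square_iff[of "k * B + s * c" B] B by simp
  ultimately have "sqnorm q * B > B * B" by (simp add: power2_eq_square)
  then show False using \<open>sqnorm q \<le> sqnorm b\<close> B unfolding B_def by simp
qed

lemma det2_unimodular_if_parallel:
  assumes pb: "det2 p b \<in> unimodular" and qb: "det2 q b \<in> unimodular"
    and "det2 p q = 0" and qr: "det2 q r \<in> unimodular"
  shows "det2 p r \<in> unimodular"
proof -
  define e s where "e = det2 p b" and "s = det2 q b"
  have "e * fst q = s * fst p" "e * snd q = s * snd p"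
    using det2_cramer[of p b q] \<open>det2 p q = 0\<close> unfolding e_def s_def by simp_all
  then have "fst p = e * s * fst q" "snd p = e * s * snd q"
    using pb qb unfolding e_def s_def by auto
  then have "det2 p r = e * s * det2 q r" unfolding det2_def by (simp add: algebra_simps)
  then show ?thesis using pb qb qr unfolding e_def s_def by auto
qed

lemma char_matrix_det2_mod:
  assumes "char_matrix xs"
  shows "det2 (xs ! (k mod length xs)) (xs ! (Suc k mod length xs)) \<in> unimodular"
proof -
  have "length xs > 0" using assms unfolding char_matrix_def by auto
  then show ?thesis
    using assms unfolding char_matrix_def by (metis mod_Suc_eq mod_less_divisor Suc_eq_plus1)
qed

definition cyclic_window :: "'a list \<Rightarrow> nat \<Rightarrow> nat \<Rightarrow> 'a list" where
  "cyclic_window xs s l = map (\<lambda>k. xs ! ((s + k) mod length xs)) [0..<l]"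

lemma length_cyclic_window [simp]: "length (cyclic_window xs s l) = l"
  by (simp add: cyclic_window_def)

lemma nth_cyclic_window [simp]:
  "k < l \<Longrightarrow> cyclic_window xs s l ! k = xs ! ((s + k) mod length xs)"
  by (simp add: cyclic_window_def)

lemma cyclic_window_eq_Nil_iff [simp]: "cyclic_window xs s l = [] \<longleftrightarrow> l = 0"
  by (simp add: cyclic_window_def)

lemma hd_cyclic_window: "0 < l \<Longrightarrow> hd (cyclic_window xs s l) = xs ! (s mod length xs)"
  by (simp add: cyclic_window_def upt_conv_Cons)

lemma last_cyclic_window:
  "0 < l \<Longrightarrow> last (cyclic_window xs s l) = xs ! ((s + (l - 1)) mod length xs)"
  by (simp add: cyclic_window_def last_map)

lemma take_drop_eq_cyclic_window:
  assumes "i + l \<le> length xs"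
  shows "take l (drop i xs) = cyclic_window xs i l"
  by (rule nth_equalityI) (use assms in auto)

lemma drop_append_take_eq_cyclic_window:
  assumes "j < length xs" "l \<le> length xs"
  shows "drop j xs @ take l xs = cyclic_window xs j (length xs - j + l)"
proof (rule nth_equalityI)
  fix k assume "k < length (drop j xs @ take l xs)"
  then have k: "k < length xs - j + l" using assms by simp
  show "(drop j xs @ take l xs) ! k = cyclic_window xs j (length xs - j + l) ! k"
  proof (cases "k < length xs - j")
    case True
    then show ?thesis using assms k by (simp add: nth_append)
  next
    case False
    then have "(j + k) mod length xs = k - (length xs - j)"
      using assms k by (simp add: le_mod_geq)
    then show ?thesis using False assms k by (simp add: nth_append)
  qed
qed (use assms in simp)

lemma char_matrix_cyclic_window:
  assumes cm: "char_matrix xs" and "3 \<le> l"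
    and closing: "det2 (xs ! ((s + (l - 1)) mod length xs)) (xs ! (s mod length xs)) \<in> unimodular"
  shows "char_matrix (cyclic_window xs s l)"
  unfolding char_matrix_def
proof (intro conjI allI impI)
  show "length (cyclic_window xs s l) \<ge> 3" using \<open>3 \<le> l\<close> by simp
  fix k assume "k < length (cyclic_window xs s l)"
  then have k: "k < l" by simp
  show "det2 (cyclic_window xs s l ! k)
          (cyclic_window xs s l ! ((k + 1) mod length (cyclic_window xs s l))) \<in> unimodular"
  proof (cases "k + 1 < l")
    case True
    then show ?thesis using char_matrix_det2_mod[OF cm, of "s + k"] k by simp
  next
    case False
    then have "k = l - 1" using k by simp
    then show ?thesis using closing k by simp
  qed
qed

lemma char_matrix_connected_sum_split:
  assumes cm: "char_matrix lam" and ij: "i < j" "j < length lam"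
    and diagonal: "\<not> facets_meet (length lam) i j"
    and det: "det2 (lam ! i) (lam ! j) \<in> unimodular"
  shows "let A = take (j - i + 1) (drop i lam);
             B = drop j lam @ take (i + 1) lam
         in length A = j - i + 1 \<and> length B = length lam - j + i + 1 \<and>
            char_matrix A \<and> char_matrix B \<and> glueable A B \<and>
            rotate i lam = connected_sum A B"
proof -
  define m where "m = length lam"
  have "i + 2 \<le> j" using diagonal ij unfolding facets_meet_def by auto
  moreover have "j + 2 \<le> i + m"
  proof (rule ccontr)
    assume "\<not> j + 2 \<le> i + m"
    then have "i = 0" "j + 1 = m" using ij m_def by auto
    then show False using diagonal unfolding facets_meet_def m_def by auto
  qed
  ultimately have A: "take (j - i + 1) (drop i lam) = cyclic_window lam i (j - i + 1)"
    and B: "drop j lam @ take (i + 1) lam = cyclic_window lam j (m - j + (i + 1))"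
    and wrap: "(j + (m - j + i)) mod m = i"
    using ij unfolding m_def
    by (simp_all add: take_drop_eq_cyclic_window drop_append_take_eq_cyclic_window)
  have "char_matrix (cyclic_window lam i (j - i + 1))"
    using \<open>i + 2 \<le> j\<close> ij det2_swap[of "lam ! j" "lam ! i"] det
    by (intro char_matrix_cyclic_window[OF cm]) auto
  moreover have "char_matrix (cyclic_window lam j (m - j + (i + 1)))"
    using \<open>j + 2 \<le> i + m\<close> ij wrap det unfolding m_def
    by (intro char_matrix_cyclic_window[OF cm]) auto
  moreover have "glueable (cyclic_window lam i (j - i + 1)) (cyclic_window lam j (m - j + (i + 1)))"
    using ij wrap unfolding glueable_def m_def
    by (auto simp: hd_cyclic_window last_cyclic_window)
  moreover have
    "rotate i lam = connected_sum (take (j - i + 1) (drop i lam)) (drop j lam @ take (i + 1) lam)"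
  proof -
    have "drop i lam = take (j - i) (drop i lam) @ drop j lam"
      using ij by (metis append_take_drop_id drop_drop le_add_diff_inverse2 less_imp_le)
    then show ?thesis
      using ij by (simp add: rotate_drop_take connected_sum_def butlast_take butlast_append)
  qed
  ultimately show ?thesis using ij unfolding Let_def A B m_def by simp
qed

lemma add_mod_neq:
  fixes m :: nat
  assumes "a < b" "b < a + m"
  shows "(x + a) mod m \<noteq> (x + b) mod m"
proof
  assume "(x + a) mod m = (x + b) mod m"
  then have "m dvd (x + b) - (x + a)"
    using assms mod_eq_dvd_iff_nat[of "x + a" "x + b" m] by simp
  then show False using assms by (auto dest: dvd_imp_le)
qed

lemma not_facets_meet_mod:
  assumes "a + 2 \<le> b" "b + 2 \<le> a + m"
  shows "\<not> facets_meet m ((x + a) mod m) ((x + b) mod m)"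
proof -
  have "(x + a) mod m \<noteq> (x + b) mod m" "(x + (a + 1)) mod m \<noteq> (x + b) mod m"
    "(x + (b + 1)) mod m \<noteq> (x + (a + m)) mod m"
    using assms by (intro add_mod_neq; simp)+
  moreover have "((x + a) mod m + 1) mod m = (x + (a + 1)) mod m"
    "((x + b) mod m + 1) mod m = (x + (b + 1)) mod m" "(x + (a + m)) mod m = (x + a) mod m"
    by (simp_all add: mod_Suc_eq add.assoc[symmetric])
  ultimately show ?thesis unfolding facets_meet_def by metis
qed

lemma exists_unimodular_diagonal:
  assumes "length lam > 4" and cm: "char_matrix lam"
  shows "\<exists>a b. a < length lam \<and> b < length lam \<and> \<not> facets_meet (length lam) a b \<and>
           det2 (lam ! a) (lam ! b) \<in> unimodular"
proof -
  define m where "m = length lam"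
  have "m > 4" using assms unfolding m_def by simp
  obtain i where "i < m" and i_max: "\<And>k. k < m \<Longrightarrow> sqnorm (lam ! k) \<le> sqnorm (lam ! i)"
  proof -
    obtain i where "i \<in> {..<m}" "Max ((\<lambda>k. sqnorm (lam ! k)) ` {..<m}) = sqnorm (lam ! i)"
      using obtains_MAX[of "{..<m}" "\<lambda>k. sqnorm (lam ! k)"] \<open>m > 4\<close> by auto
    then show thesis using that by (metis Max_ge finite_imageI finite_lessThan image_eqI lessThan_iff)
  qed
  define x where "x = i + m - 1"
  define v where "v t = lam ! ((x + t) mod m)" for t
  have "v 1 = lam ! i" using \<open>i < m\<close> unfolding v_def x_def by simp
  then have shorter: "sqnorm (v t) \<le> sqnorm (v 1)" for t
    using i_max \<open>m > 4\<close> unfolding v_def by simp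
  have consecutive: "det2 (v t) (v (Suc t)) \<in> unimodular" for t
    using char_matrix_det2_mod[OF cm, of "x + t"] unfolding v_def m_def by simp
  have d01: "det2 (v 0) (v 1) \<in> unimodular" and d21: "det2 (v 2) (v 1) \<in> unimodular"
    and d23: "det2 (v 2) (v 3) \<in> unimodular"
    using consecutive[of 0] consecutive[of 1] consecutive[of 2] det2_swap[of "v 2" "v 1"]
    by (auto simp: numeral_2_eq_2 numeral_3_eq_3)
  have "\<bar>det2 (v 0) (v 2)\<bar> \<le> 1"
    using d01 d21 by (intro abs_det2_le_1_if_shorter[where b = "v 1"] shorter)
  then have "det2 (v 0) (v 2) = 1 \<or> det2 (v 0) (v 2) = -1 \<or> det2 (v 0) (v 2) = 0" by arith
  then consider "det2 (v 0) (v 2) \<in> unimodular" | "det2 (v 0) (v 2) = 0" by auto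
  then obtain t where "t \<in> {2, 3}" and "det2 (v 0) (v t) \<in> unimodular"
  proof cases
    case 2
    then show thesis using that det2_unimodular_if_parallel[OF d01 d21 2 d23] by blast
  qed (use that in blast)
  moreover have "\<not> facets_meet m ((x + 0) mod m) ((x + t) mod m)"
    using \<open>t \<in> {2, 3}\<close> \<open>m > 4\<close> by (intro not_facets_meet_mod) auto
  moreover have "(x + 0) mod m < m" "(x + t) mod m < m" using \<open>m > 4\<close> by simp_all
  ultimately show ?thesis unfolding v_def m_def by blast
qed

theorem lemma4p5:
  fixes lam :: "(int \<times> int) list"
  assumes "length lam > 4"
    and "char_matrix lam"
  shows "\<exists>i j. i < j \<and> j < length lam \<and>
           \<not> facets_meet (length lam) i j \<and>
           det2 (lam ! i) (lam ! j) \<in> {1, -1} \<and>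
           (let A = take (j - i + 1) (drop i lam);
                B = drop j lam @ take (i + 1) lam
            in length A = j - i + 1 \<and> length B = length lam - j + i + 1 \<and>
               char_matrix A \<and> char_matrix B \<and> glueable A B \<and>
               rotate i lam = connected_sum A B)"
proof -
  obtain a b where ab: "a < length lam" "b < length lam"
    and diagonal: "\<not> facets_meet (length lam) a b" and det: "det2 (lam ! a) (lam ! b) \<in> unimodular"
    using exists_unimodular_diagonal[OF assms] by blast
  have "a \<noteq> b" using diagonal unfolding facets_meet_def by auto
  moreover have "\<not> facets_meet (length lam) b a" "det2 (lam ! b) (lam ! a) \<in> unimodular"
    using diagonal det det2_swap[of "lam ! b" "lam ! a"] unfolding facets_meet_def by auto
  ultimately show ?thesis
    using ab diagonal det char_matrix_connected_sum_split[OF assms(2)] by (metis linorder_neqE_nat)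
qed

end
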